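(* Let $\mathcal{S}$ be a relational structure admitting an injective unary FA-presentation $(a^*,\phi)$, and let $R$ be a binary relation in the signature of $\mathcal{S}$. Let $R^*$ denote the reflexive and transitive closure of $R$. Then $\Lambda(R^*,\phi)=\{(u,v)\in a^*\times a^* : (u\phi,v\phi)\in R^*\}$ is regular. Hence $\mathcal{S}$ augmented by the relation $R^*$ is also unary FA-presentable.
   Context: For words $w_1,\dots,w_r$ over a finite alphabet $A$, $\mathrm{conv}(w_1,\dots,w_r)$ is the word over $(A\cup\{\$\})^r$ (with $\$\notin A$) whose $j$-th letter is the tuple of $j$-th letters of the $w_i$, shorter words being padded at the end with $\$$ up to the maximal length. A relation $X\subseteq (A^* )^r$ is regular if $\{\mathrm{conv}(w_1,\dots,w_r):(w_1,\dots,w_r)\in X\}$ is a regular language. An FA-presentation of a relational structure $\mathcal{S}=(S,R_1,\dots,R_n)$ is a pair $(L,\phi)$ with $L$ a regular language over a finite alphabet and $\phi:L\to S$ surjective such that for every relation $R\in\{=,R_1,\dots,R_n\}$ of arity $r$ the relation $\Lambda(R,\phi)=\{(w_1,\dots,w_r)\in L^r : R(w_1\phi,\dots,w_r\phi)\}$ is regular. It is unary if $L$ is over a one-letter alphabet $\{a\}$, and a structure is unary FA-presentable if it admits a unary FA-presentation. An injective unary FA-presentation $(a^*,\phi)$ is one with $L=a^*$ and $\phi$ injective (hence bijective). *)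

theory Defs
  imports Main
begin

text \<open>Convolution of finitely many words: the j-th letter is the list (tuple) of the
j-th letters of the words, None playing the role of the padding symbol.\<close>
definition maxlen :: "'a list list \<Rightarrow> nat" where
  "maxlen ws = foldr max (map length ws) 0"

definition conv :: "'a list list \<Rightarrow> 'a option list list" where
  "conv ws = map (\<lambda>j. map (\<lambda>w. if j < length w then Some (w ! j) else None) ws) [0..<maxlen ws]"

definition regular_lang :: "'a set \<Rightarrow> 'a list set \<Rightarrow> bool" where
  "regular_lang Alph L \<longleftrightarrow> finite Alph \<and> L \<subseteq> lists Alph \<and>
     (\<exists>(Q::nat set) (delta::nat \<Rightarrow> 'a \<Rightarrow> nat) q0 F.
        finite Q \<and> q0 \<in> Q \<and> (\<forall>q\<in>Q. \<forall>x\<in>Alph. delta q x \<in> Q) \<and>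
        L = {w \<in> lists Alph. foldl delta q0 w \<in> F})"

definition conv_alphabet :: "'a set \<Rightarrow> nat \<Rightarrow> 'a option list set" where
  "conv_alphabet A r = {xs. length xs = r \<and> set xs \<subseteq> Some ` A \<union> {None}}"

definition regular_rel :: "'a set \<Rightarrow> nat \<Rightarrow> 'a list list set \<Rightarrow> bool" where
  "regular_rel A r X \<longleftrightarrow> X \<subseteq> {ws. length ws = r \<and> set ws \<subseteq> lists A} \<and>
     regular_lang (conv_alphabet A r) (conv ` X)"

definition Lambda :: "'a list set \<Rightarrow> ('a list \<Rightarrow> 's) \<Rightarrow> nat \<Rightarrow> ('s list \<Rightarrow> bool) \<Rightarrow> 'a list list set" where
  "Lambda L phi r P = {ws. length ws = r \<and> set ws \<subseteq> L \<and> P (map phi ws)}"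

text \<open>A relational structure is a carrier S with a list of relations (arity, predicate).
An FA-presentation (L, phi) over the finite alphabet A.\<close>
definition FA_presentation ::
  "'a set \<Rightarrow> 'a list set \<Rightarrow> ('a list \<Rightarrow> 's) \<Rightarrow> 's set \<Rightarrow> (nat \<times> ('s list \<Rightarrow> bool)) list \<Rightarrow> bool" where
  "FA_presentation A L phi S rels \<longleftrightarrow> finite A \<and> regular_lang A L \<and> phi ` L = S \<and>
     regular_rel A 2 (Lambda L phi 2 (\<lambda>xs. xs ! 0 = xs ! 1)) \<and>
     (\<forall>(r, P) \<in> set rels. regular_rel A r (Lambda L phi r P))"

text \<open>Unary: the alphabet is the one-letter alphabet {()}.\<close>
definition unary_FA_presentable :: "'s set \<Rightarrow> (nat \<times> ('s list \<Rightarrow> bool)) list \<Rightarrow> bool" where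
  "unary_FA_presentable S rels \<longleftrightarrow> (\<exists>L (phi :: unit list \<Rightarrow> 's). FA_presentation {()} L phi S rels)"

definition injective_unary_FA_presentation ::
  "'s set \<Rightarrow> (nat \<times> ('s list \<Rightarrow> bool)) list \<Rightarrow> (unit list \<Rightarrow> 's) \<Rightarrow> bool" where
  "injective_unary_FA_presentation S rels phi \<longleftrightarrow>
     FA_presentation {()} (lists {()}) phi S rels \<and> inj_on phi (lists {()})"

definition rtc_on :: "'s set \<Rightarrow> ('s list \<Rightarrow> bool) \<Rightarrow> 's \<Rightarrow> 's \<Rightarrow> bool" where
  "rtc_on S P = (\<lambda>x y. x \<in> S \<and> y \<in> S \<and> P [x, y])\<^sup>*\<^sup>*"

end

(*
  Identify a^m with m, so that a binary relation of the structure becomes a relation E on the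
  naturals. Its convolution is regular iff E is ultimately periodic: beyond a threshold N it is
  invariant under shifting both arguments by a period p, and under shifting the larger argument
  by p once it exceeds the smaller one by at least N. (A DFA reads a block of letters (a, a)
  followed by a one-sided tail, and its runs on a single letter are eventually periodic;
  conversely, such an E is recognised by a DFA counting modulo p.) So it suffices to show that
  E^* is ultimately periodic.

  Fix a frontier z. A path between vertices below z consists of steps below z and of excursions
  above z; since the graph above z >= N is invariant under shifts by p, whether an excursion
  joins u and u' only depends on the residues of u, u', z - u and z - u'. Record which such
  residue data ("keys") are joined by paths below z. This summary lives in a finite set and is
  updated deterministically as z grows, so it is eventually periodic, with a period divisible by
  p; as it determines E^* below z, shifting by that period does not change E^*.
*)

theory Submission
  imports Defs "HOL-Library.Countable"
begin

lemma rtranclp_restrict_range_iff: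
  assumes "inj f"
  shows "(\<lambda>a b. a \<in> range f \<and> b \<in> range f \<and> R a b)\<^sup>*\<^sup>* (f m) (f n) \<longleftrightarrow> (\<lambda>i j. R (f i) (f j))\<^sup>*\<^sup>* m n"
proof
  have "\<exists>k. b = f k \<and> (\<lambda>i j. R (f i) (f j))\<^sup>*\<^sup>* m k"
    if "(\<lambda>a b. a \<in> range f \<and> b \<in> range f \<and> R a b)\<^sup>*\<^sup>* (f m) b" for b
    using that
  proof (induction rule: rtranclp_induct)
    case (step b c)
    then obtain k where "b = f k" "(\<lambda>i j. R (f i) (f j))\<^sup>*\<^sup>* m k" by blast
    moreover obtain k' where "c = f k'" using step(2) by blast
    ultimately show ?case using step(2) by (blast intro: rtranclp.rtrancl_into_rtrancl)
  qed blast
  then show "(\<lambda>i j. R (f i) (f j))\<^sup>*\<^sup>* m n" if "(\<lambda>a b. a \<in> range f \<and> b \<in> range f \<and> R a b)\<^sup>*\<^sup>* (f m) (f n)"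
    using that assms by (auto dest: injD)
next
  show "(\<lambda>a b. a \<in> range f \<and> b \<in> range f \<and> R a b)\<^sup>*\<^sup>* (f m) (f n)" if "(\<lambda>i j. R (f i) (f j))\<^sup>*\<^sup>* m n"
    using that by (induction rule: rtranclp_induct) (auto intro: rtranclp.rtrancl_into_rtrancl)
qed

lemma deterministic_seq_periodic:
  assumes "finite A" and in_A: "\<And>i. a \<le> i \<Longrightarrow> s i \<in> A"
    and det: "\<And>i j. a \<le> i \<Longrightarrow> a \<le> j \<Longrightarrow> s i = s j \<Longrightarrow> s (Suc i) = s (Suc j)"
    and "a + card A \<le> t"
  shows "s (t + fact (card A)) = s t"
proof -
  have "\<not> inj_on s {a..a + card A}"
  proof
    assume "inj_on s {a..a + card A}"
    moreover have "s ` {a..a + card A} \<subseteq> A" using in_A by auto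
    ultimately show False using card_inj_on_le[OF _ _ \<open>finite A\<close>] by fastforce
  qed
  then obtain i j where ij: "a \<le> i" "i < j" "j \<le> a + card A" "s i = s j"
    unfolding inj_on_def by (metis atLeastAtMost_iff linorder_neqE_nat)
  define d where "d = j - i"
  have step: "s (i + k + d) = s (i + k)" for k
  proof (induction k)
    case (Suc k)
    then show ?case using det[of "i + k + d" "i + k"] ij(1) by simp
  qed (use ij in \<open>simp add: d_def\<close>)
  have multiple: "s (i + k + m * d) = s (i + k)" for k m
  proof (induction m)
    case (Suc m)
    have "i + k + Suc m * d = i + (k + m * d) + d" by simp
    then show ?case using step[of "k + m * d"] Suc by (metis add.assoc)
  qed simp
  have "d dvd fact (card A)"
    using ij by (intro dvd_fact) (auto simp: d_def)
  then obtain m where "fact (card A) = m * d" by (metis dvd_def mult.commute)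
  moreover have "t = i + (t - i)" using ij assms(4) by simp
  ultimately show ?thesis using multiple[of "t - i" m] by metis
qed

lemma foldl_replicate_periodic:
  assumes "finite Q" "q \<in> Q" "\<And>q. q \<in> Q \<Longrightarrow> delta q l \<in> Q" "card Q \<le> k"
  shows "foldl delta q (replicate (k + fact (card Q)) l) = foldl delta q (replicate k l)"
proof -
  have run_Suc: "foldl delta q (replicate (Suc i) l) = delta (foldl delta q (replicate i l)) l" for i
    by (simp only: replicate_Suc replicate_append_same[symmetric] foldl_append foldl.simps)
  have "foldl delta q' (replicate i l) \<in> Q" if "q' \<in> Q" for q' i
    using that assms(3) by (induction i arbitrary: q') auto
  then have "(\<lambda>i. foldl delta q (replicate i l)) (k + fact (card Q)) = (\<lambda>i. foldl delta q (replicate i l)) k"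
    using assms(2,4) by (intro deterministic_seq_periodic[OF assms(1), where a = 0]) (simp_all only: run_Suc)
  then show ?thesis by simp
qed

text \<open>The definition of regularity asks for automata with natural-number states; any
  countable state type can be encoded.\<close>

lemma regular_langI:
  fixes delta :: "'q::countable \<Rightarrow> 'a \<Rightarrow> 'q"
  assumes "finite Alph" "finite Q" "q0 \<in> Q" "\<forall>q\<in>Q. \<forall>x\<in>Alph. delta q x \<in> Q"
    and L: "L = {w \<in> lists Alph. foldl delta q0 w \<in> F}"
  shows "regular_lang Alph L"
proof -
  define delta' where "delta' n x = to_nat (delta (from_nat n) x)" for n x
  have run: "foldl delta' (to_nat q) w = to_nat (foldl delta q w)" for q w
    by (induction w arbitrary: q) (simp_all add: delta'_def)
  have "L = {w \<in> lists Alph. foldl delta' (to_nat q0) w \<in> to_nat ` F}"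
    by (simp add: L run inj_image_mem_iff)
  moreover have "\<forall>q\<in>to_nat ` Q. \<forall>x\<in>Alph. delta' q x \<in> to_nat ` Q"
    using assms(4) by (auto simp: delta'_def)
  ultimately show ?thesis
    unfolding regular_lang_def using assms(1-3)
    by (intro conjI exI[of _ "to_nat ` Q"] exI[of _ delta'] exI[of _ "to_nat q0"] exI[of _ "to_nat ` F"]) auto
qed

lemma finite_conv_alphabet: "finite A \<Longrightarrow> finite (conv_alphabet A r)"
  using finite_lists_length_eq[of "Some ` A \<union> {None}" r] by (simp add: conv_alphabet_def conj_commute)

lemma FA_presentation_snoc:
  assumes "FA_presentation A L phi S rels" "regular_rel A r (Lambda L phi r Q)"
  shows "FA_presentation A L phi S (rels @ [(r, Q)])"
  using assms by (simp add: FA_presentation_def)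

section \<open>Convolutions of pairs of unary words\<close>

definition pair_word :: "nat \<Rightarrow> nat \<Rightarrow> unit option list list" where
  "pair_word m n =
     map (\<lambda>j. [if j < m then Some () else None, if j < n then Some () else None]) [0..<max m n]"

definition pair_lang :: "(nat \<Rightarrow> nat \<Rightarrow> bool) \<Rightarrow> unit option list list set" where
  "pair_lang E = {pair_word m n | m n. E m n}"

abbreviation letter_both :: "unit option list" where "letter_both \<equiv> [Some (), Some ()]"
abbreviation letter_fst :: "unit option list" where "letter_fst \<equiv> [Some (), None]"
abbreviation letter_snd :: "unit option list" where "letter_snd \<equiv> [None, Some ()]"

lemma conv_unit_pair: "conv [u, v :: unit list] = pair_word (length u) (length v)"
  by (simp add: conv_def maxlen_def pair_word_def)

lemma pair_word_replicate:
  "pair_word m n = replicate (min m n) letter_both @ replicate (m - n) letter_fst @ replicate (n - m) letter_snd"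
  by (rule nth_equalityI) (auto simp: pair_word_def nth_append min_def max_def)

lemma pair_word_inj: "pair_word m n = pair_word m' n' \<longleftrightarrow> m = m' \<and> n = n'"
proof -
  have "length (filter (\<lambda>l. hd l \<noteq> None) (pair_word m n)) = m"
    "length (filter (\<lambda>l. last l \<noteq> None) (pair_word m n)) = n" for m n
    by (simp_all add: pair_word_replicate)
  then show ?thesis by metis
qed

lemma pair_word_in_lists: "pair_word m n \<in> lists (conv_alphabet {()} 2)"
  by (auto simp: pair_word_def conv_alphabet_def)

lemma pair_word_snoc:
  "pair_word m m @ [letter_both] = pair_word (Suc m) (Suc m)"
  "m \<le> n \<Longrightarrow> pair_word m n @ [letter_snd] = pair_word m (Suc n)"
  "n \<le> m \<Longrightarrow> pair_word m n @ [letter_fst] = pair_word (Suc m) n"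
  by (simp_all add: pair_word_replicate replicate_append_same Suc_diff_le)

lemma replicate_length_unit [simp]: "replicate (length u) () = u"
  by (simp add: replicate_length_same)

lemma conv_Lambda_unary_pairs:
  "conv ` Lambda (lists {()}) phi 2 R = pair_lang (\<lambda>m n. R [phi (replicate m ()), phi (replicate n ())])"
proof -
  have L: "Lambda (lists {()}) phi 2 R = (\<lambda>(m, n). [replicate m (), replicate n ()]) `
          {(m, n). R [phi (replicate m ()), phi (replicate n ())]}"
    by (auto simp: Lambda_def length_Suc_conv numeral_2_eq_2 image_iff) (metis replicate_length_unit)
  have "conv ` Lambda (lists {()}) phi 2 R =
          (\<lambda>(m, n). pair_word m n) ` {(m, n). R [phi (replicate m ()), phi (replicate n ())]}"
    unfolding L image_image by (simp add: conv_unit_pair case_prod_beta)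
  then show ?thesis by (auto simp: pair_lang_def)
qed

lemma regular_rel_unary_pair_iff:
  "regular_rel {()} 2 (Lambda (lists {()}) phi 2 R) \<longleftrightarrow>
   regular_lang (conv_alphabet {()} 2) (pair_lang (\<lambda>m n. R [phi (replicate m ()), phi (replicate n ())]))"
  by (auto simp: regular_rel_def Lambda_def conv_Lambda_unary_pairs[symmetric])

section \<open>Ultimately periodic relations on the naturals\<close>

locale ult_periodic =
  fixes E :: "nat \<Rightarrow> nat \<Rightarrow> bool" and N p :: nat
  assumes period_pos: "0 < p"
    and shift_both: "N \<le> x \<Longrightarrow> N \<le> y \<Longrightarrow> E (x + p) (y + p) = E x y"
    and shift_right: "x + N \<le> y \<Longrightarrow> E x (y + p) = E x y"
    and shift_left: "y + N \<le> x \<Longrightarrow> E (x + p) y = E x y"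

lemma ult_periodic_conversep: "ult_periodic E N p \<Longrightarrow> ult_periodic E\<inverse>\<inverse> N p"
  unfolding ult_periodic_def by auto

context ult_periodic
begin

lemma ult_periodic_converse: "ult_periodic E\<inverse>\<inverse> N p"
  using ult_periodic_axioms by (rule ult_periodic_conversep)

definition rep :: "nat \<Rightarrow> nat" where
  "rep t = (if t < N then t else N + (t - N) mod p)"

lemma rep_less: "rep t < N + p"
  using period_pos by (simp add: rep_def)

lemma rep_0 [simp]: "rep 0 = 0"
  by (simp add: rep_def)

lemma rep_rep [simp]: "rep (rep t) = rep t"
  by (simp add: rep_def)

lemma rep_le: "rep t \<le> t"
proof (cases "t < N")
  case False
  then have "rep t = N + (t - N) mod p" by (simp add: rep_def)
  moreover have "(t - N) mod p \<le> t - N" by (rule mod_less_eq_dividend)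
  ultimately show ?thesis using False by linarith
qed (simp add: rep_def)

lemma rep_ge: "N \<le> t \<Longrightarrow> N \<le> rep t"
  by (simp add: rep_def)

lemma dvd_diff_rep: "p dvd (t - rep t)"
proof (cases "t < N")
  case False
  then have "t - rep t = (t - N) - (t - N) mod p" by (simp add: rep_def)
  then show ?thesis by (simp add: minus_mod_eq_mult_div)
qed (simp add: rep_def)

lemma rep_Suc: "rep a = rep b \<Longrightarrow> rep (Suc a) = rep (Suc b)"
  by (auto simp: rep_def Suc_diff_le mod_Suc split: if_splits)

lemma rep_Suc_rep: "rep (Suc (rep t)) = rep (Suc t)"
  using rep_Suc[OF rep_rep] .

lemma rep_add: "rep a = rep b \<Longrightarrow> rep (a + k) = rep (b + k)"
  by (induction k) (auto intro: rep_Suc)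

lemma rep_add_dvd: "N \<le> t \<Longrightarrow> p dvd d \<Longrightarrow> rep (t + d) = rep t"
  by (auto simp: rep_def elim!: dvdE simp flip: add_diff_assoc2)

lemma E_shift_mult: "N \<le> x \<Longrightarrow> N \<le> y \<Longrightarrow> E (x + k * p) (y + k * p) = E x y"
proof (induction k)
  case (Suc k)
  have "E (x + Suc k * p) (y + Suc k * p) = E (x + k * p + p) (y + k * p + p)"
    by (simp add: algebra_simps)
  then show ?case using Suc by (simp add: shift_both)
qed simp

lemma E_shift_dvd: "N \<le> x \<Longrightarrow> N \<le> y \<Longrightarrow> p dvd d \<Longrightarrow> E (x + d) (y + d) = E x y"
  by (auto elim!: dvdE simp: E_shift_mult mult.commute)

lemma E_extend_mult: "x + N \<le> y \<Longrightarrow> E x (y + k * p) = E x y"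
proof (induction k)
  case (Suc k)
  have "E x (y + Suc k * p) = E x (y + k * p + p)"
    by (simp add: algebra_simps)
  then show ?case using Suc by (simp add: shift_right)
qed simp

lemma E_extend_dvd: "x + N \<le> y \<Longrightarrow> p dvd d \<Longrightarrow> E x (y + d) = E x y"
  by (auto elim!: dvdE simp: E_extend_mult mult.commute)

lemma E_rep_normal: "E a (a + k) = E (rep a) (rep a + rep k)"
proof -
  have base: "E a (a + k) = E (rep a) (rep a + k)"
  proof (cases "a < N")
    case False
    then have "N \<le> rep a" by (simp add: rep_ge)
    then show ?thesis
      using E_shift_dvd[OF _ _ dvd_diff_rep, of "rep a" "rep a + k" a] rep_le[of a] by (simp add: add.commute)
  qed (simp add: rep_def)
  have offset: "E c (c + k) = E c (c + rep k)" for c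
  proof (cases "k < N")
    case False
    then have "N \<le> rep k" by (simp add: rep_ge)
    then show ?thesis
      using E_extend_dvd[OF _ dvd_diff_rep, of c "c + rep k" k] rep_le[of k] by simp
  qed (simp add: rep_def)
  show ?thesis using base offset by simp
qed

lemma E_rep_cong:
  assumes "u \<le> b" "u' \<le> b'" "rep u = rep u'" "rep (b - u) = rep (b' - u')"
  shows "E u b = E u' b'"
  using E_rep_normal[of u "b - u"] E_rep_normal[of u' "b' - u'"] assms by simp

lemmas E_rep_normal' = ult_periodic.E_rep_normal[OF ult_periodic_converse, unfolded conversep_iff]
lemmas E_rep_cong' = ult_periodic.E_rep_cong[OF ult_periodic_converse, unfolded conversep_iff]

end

section \<open>Regular pair languages and ultimately periodic relations\<close>

lemma ult_periodic_if_regular_pair_lang: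
  assumes "regular_lang (conv_alphabet {()} 2) (pair_lang E)"
  obtains N p where "ult_periodic E N p"
proof -
  define Alph where "Alph = conv_alphabet {()} 2"
  obtain Q :: "nat set" and delta q0 F where Q: "finite Q" "q0 \<in> Q" "\<forall>q\<in>Q. \<forall>x\<in>Alph. delta q x \<in> Q"
    and L: "pair_lang E = {w \<in> lists Alph. foldl delta q0 w \<in> F}"
    using assms unfolding regular_lang_def Alph_def by blast
  define run where "run l k q = foldl delta q (replicate k l)" for l k q
  have run_in_Q: "run l k q \<in> Q" if "q \<in> Q" "l \<in> Alph" for l k q
    using that Q(3) unfolding run_def by (induction k arbitrary: q) auto
  define C where "C = card Q"
  have run_periodic: "run l (k + fact C) q = run l k q" if "q \<in> Q" "l \<in> Alph" "C \<le> k" for l k q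
    using foldl_replicate_periodic[OF Q(1) that(1), of delta l k] that(2,3) Q(3)
    by (simp add: run_def C_def)
  have letters: "letter_both \<in> Alph" "letter_fst \<in> Alph" "letter_snd \<in> Alph"
    by (auto simp: Alph_def conv_alphabet_def)
  have E_run: "E m n \<longleftrightarrow> run letter_snd (n - m) (run letter_fst (m - n) (run letter_both (min m n) q0)) \<in> F"
    for m n
  proof -
    have "E m n \<longleftrightarrow> pair_word m n \<in> pair_lang E"
      by (auto simp: pair_lang_def pair_word_inj)
    also have "\<dots> \<longleftrightarrow> foldl delta q0 (pair_word m n) \<in> F"
      using pair_word_in_lists by (simp add: L Alph_def)
    finally show ?thesis by (simp add: run_def pair_word_replicate)
  qed
  have "ult_periodic E C (fact C)"
  proof
    show "0 < (fact C :: nat)" by simp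
  next
    fix x y assume "C \<le> x" "C \<le> y"
    moreover have "min (x + fact C) (y + fact C) = min x y + fact C" by (simp add: min_def)
    ultimately show "E (x + fact C) (y + fact C) = E x y"
      using run_periodic[OF Q(2) letters(1), of "min x y"] by (simp add: E_run run_def)
  next
    fix x y assume "x + C \<le> y"
    moreover have "run letter_both x q0 \<in> Q" using run_in_Q Q(2) letters by blast
    ultimately show "E x (y + fact C) = E x y"
      using run_periodic[OF _ letters(3), of "run letter_both x q0" "y - x"] by (simp add: E_run run_def)
  next
    fix x y assume "y + C \<le> x"
    moreover have "run letter_both y q0 \<in> Q" using run_in_Q Q(2) letters by blast
    ultimately show "E (x + fact C) y = E x y"
      using run_periodic[OF _ letters(2), of "run letter_both y q0" "x - y"] by (simp add: E_run run_def)
  qed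
  then show ?thesis by (rule that)
qed

datatype pair_state = Diag nat | Fst_ahead nat nat | Snd_ahead nat nat | Sink

instance pair_state :: countable
  by countable_datatype

context ult_periodic
begin

fun pair_step :: "pair_state \<Rightarrow> unit option list \<Rightarrow> pair_state" where
  "pair_step (Diag c) l =
     (if l = letter_both then Diag (rep (Suc c))
      else if l = letter_fst then Fst_ahead c (rep 1)
      else if l = letter_snd then Snd_ahead c (rep 1) else Sink)"
| "pair_step (Fst_ahead c d) l = (if l = letter_fst then Fst_ahead c (rep (Suc d)) else Sink)"
| "pair_step (Snd_ahead c d) l = (if l = letter_snd then Snd_ahead c (rep (Suc d)) else Sink)"
| "pair_step Sink l = Sink"

definition state_of :: "nat \<Rightarrow> nat \<Rightarrow> pair_state" where
  "state_of m n =
     (if m = n then Diag (rep m)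
      else if n < m then Fst_ahead (rep n) (rep (m - n)) else Snd_ahead (rep m) (rep (n - m)))"

definition accepting :: "pair_state set" where
  "accepting = {q. case q of Diag c \<Rightarrow> E c c | Fst_ahead c d \<Rightarrow> E (c + d) c
                             | Snd_ahead c d \<Rightarrow> E c (c + d) | Sink \<Rightarrow> False}"

lemma state_of_accepting: "state_of m n \<in> accepting \<longleftrightarrow> E m n"
proof -
  consider "m = n" | "n < m" | "m < n" by linarith
  then show ?thesis
  proof cases
    case 1
    then show ?thesis using E_rep_normal[of m 0] by (simp add: state_of_def accepting_def)
  next
    case 2
    then show ?thesis using E_rep_normal'[of n "m - n"] by (simp add: state_of_def accepting_def)
  next
    case 3
    then show ?thesis using E_rep_normal[of m "n - m"] by (simp add: state_of_def accepting_def)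
  qed
qed

lemma pair_step_state_of:
  "pair_step (state_of m n) l =
     (if l = letter_both \<and> m = n then state_of (Suc m) (Suc n)
      else if l = letter_fst \<and> n \<le> m then state_of (Suc m) n
      else if l = letter_snd \<and> m \<le> n then state_of m (Suc n) else Sink)"
  by (auto simp: state_of_def Suc_diff_le rep_Suc_rep)

lemma run_pair_word: "foldl pair_step (Diag 0) (pair_word m n) = state_of m n"
proof -
  have diag: "foldl pair_step (Diag 0) (pair_word m m) = state_of m m" for m
  proof (induction m)
    case 0
    then show ?case by (simp add: pair_word_def state_of_def)
  next
    case (Suc m)
    then show ?case by (simp flip: pair_word_snoc add: pair_step_state_of)
  qed
  have fst: "foldl pair_step (Diag 0) (pair_word (n + k) n) = state_of (n + k) n" for n k
    by (induction k) (simp_all add: diag flip: pair_word_snoc add: pair_step_state_of)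
  have snd: "foldl pair_step (Diag 0) (pair_word m (m + k)) = state_of m (m + k)" for m k
    by (induction k) (simp_all add: diag flip: pair_word_snoc add: pair_step_state_of)
  show ?thesis
    using fst[of n "m - n"] snd[of m "n - m"] by (cases "n \<le> m") simp_all
qed

lemma run_not_Sink: "foldl pair_step (Diag 0) w \<noteq> Sink \<Longrightarrow> \<exists>m n. w = pair_word m n"
proof (induction w rule: rev_induct)
  case Nil
  then show ?case by (intro exI[of _ 0]) (simp add: pair_word_def)
next
  case (snoc l w)
  then obtain m n where w: "w = pair_word m n" by force
  then have "pair_step (state_of m n) l \<noteq> Sink" using snoc.prems by (simp add: run_pair_word)
  then show ?case
    unfolding pair_step_state_of w by (metis pair_word_snoc)
qed

definition pair_states :: "pair_state set" where
  "pair_states = Diag ` {..<N + p} \<union> case_prod Fst_ahead ` ({..<N + p} \<times> {..<N + p})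
                 \<union> case_prod Snd_ahead ` ({..<N + p} \<times> {..<N + p}) \<union> {Sink}"

lemma in_pair_states [simp]:
  "Diag c \<in> pair_states \<longleftrightarrow> c < N + p"
  "Fst_ahead c d \<in> pair_states \<longleftrightarrow> c < N + p \<and> d < N + p"
  "Snd_ahead c d \<in> pair_states \<longleftrightarrow> c < N + p \<and> d < N + p"
  "Sink \<in> pair_states"
  by (force simp: pair_states_def)+

lemma pair_step_closed: "q \<in> pair_states \<Longrightarrow> pair_step q l \<in> pair_states"
  by (cases q) (auto simp: rep_less)

lemma regular_pair_lang: "regular_lang (conv_alphabet {()} 2) (pair_lang E)"
proof (rule regular_langI)
  show "finite (conv_alphabet {()} 2)" by (simp add: finite_conv_alphabet)
  show "finite pair_states" by (simp add: pair_states_def)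
  show "Diag 0 \<in> pair_states" using period_pos by simp
  show "\<forall>q\<in>pair_states. \<forall>x\<in>conv_alphabet {()} 2. pair_step q x \<in> pair_states"
    by (simp add: pair_step_closed)
  show "pair_lang E = {w \<in> lists (conv_alphabet {()} 2). foldl pair_step (Diag 0) w \<in> accepting}"
  proof (intro set_eqI iffI)
    fix w assume "w \<in> pair_lang E"
    then obtain m n where "w = pair_word m n" "E m n" by (auto simp: pair_lang_def)
    then show "w \<in> {w \<in> lists (conv_alphabet {()} 2). foldl pair_step (Diag 0) w \<in> accepting}"
      using pair_word_in_lists by (simp add: run_pair_word state_of_accepting)
  next
    fix w assume w: "w \<in> {w \<in> lists (conv_alphabet {()} 2). foldl pair_step (Diag 0) w \<in> accepting}"
    then have "foldl pair_step (Diag 0) w \<noteq> Sink" by (auto simp: accepting_def)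
    with w show "w \<in> pair_lang E"
      by (force dest!: run_not_Sink simp: pair_lang_def run_pair_word state_of_accepting)
  qed
qed

end

section \<open>The reflexive transitive closure of an ultimately periodic relation\<close>

type_synonym vertex_key = "nat \<times> nat \<times> bool \<times> bool"

abbreviation marks :: "nat \<Rightarrow> nat \<Rightarrow> nat \<Rightarrow> bool \<times> bool" where
  "marks x y \<equiv> \<lambda>a. (a = x, a = y)"

context ult_periodic
begin

definition E_below :: "nat \<Rightarrow> nat \<Rightarrow> nat \<Rightarrow> bool" where
  "E_below z a b \<longleftrightarrow> a < z \<and> b < z \<and> E a b"

definition excursion :: "nat \<Rightarrow> nat \<Rightarrow> nat \<Rightarrow> bool" where
  "excursion z u u' \<longleftrightarrow> (\<exists>i j. E u (z + i) \<and> (\<lambda>i j. E (z + i) (z + j))\<^sup>*\<^sup>* i j \<and> E (z + j) u')"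

definition shortcut :: "nat \<Rightarrow> nat \<Rightarrow> nat \<Rightarrow> bool" where
  "shortcut z a b \<longleftrightarrow> a < z \<and> b < z \<and> (E a b \<or> excursion z a b)"

lemma rtranclp_above: "(\<lambda>i j. E (z + i) (z + j))\<^sup>*\<^sup>* i j \<Longrightarrow> E\<^sup>*\<^sup>* (z + i) (z + j)"
  by (induction rule: rtranclp_induct) auto

lemma rtranclp_shortcut_imp: "(shortcut z)\<^sup>*\<^sup>* u u' \<Longrightarrow> E\<^sup>*\<^sup>* u u'"
proof (induction rule: rtranclp_induct)
  case (step w w')
  from step(2) have "E w w' \<or> excursion z w w'" by (simp add: shortcut_def)
  then have "E\<^sup>*\<^sup>* w w'"
  proof
    assume "excursion z w w'"
    then obtain i j where "E w (z + i)" "(\<lambda>i j. E (z + i) (z + j))\<^sup>*\<^sup>* i j" "E (z + j) w'"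
      by (auto simp: excursion_def)
    then show ?thesis
      using rtranclp_above by (meson converse_rtranclp_into_rtranclp rtranclp.rtrancl_into_rtrancl)
  qed simp
  then show ?case using step.IH by simp
qed simp

lemma rtranclp_imp_shortcut_or_above:
  assumes "E\<^sup>*\<^sup>* u w" "u < z"
  shows "(w < z \<longrightarrow> (shortcut z)\<^sup>*\<^sup>* u w) \<and>
         (z \<le> w \<longrightarrow> (\<exists>a i. a < z \<and> (shortcut z)\<^sup>*\<^sup>* u a \<and> E a (z + i) \<and>
                                  (\<lambda>i j. E (z + i) (z + j))\<^sup>*\<^sup>* i (w - z)))"
  using assms(1)
proof (induction rule: rtranclp_induct)
  case base
  then show ?case using assms(2) by simp
next
  case (step w w')
  show ?case
  proof (cases "w < z")
    case True
    then have reach: "(shortcut z)\<^sup>*\<^sup>* u w" using step.IH by simp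
    show ?thesis
    proof (cases "w' < z")
      case True
      then have "shortcut z w w'" using \<open>w < z\<close> step(2) by (simp add: shortcut_def)
      then show ?thesis using reach True by (auto intro: rtranclp.rtrancl_into_rtrancl)
    next
      case False
      then show ?thesis using reach \<open>w < z\<close> step(2)
        by (intro conjI impI exI[of _ w] exI[of _ "w' - z"]) auto
    qed
  next
    case False
    then obtain a i where a: "a < z" "(shortcut z)\<^sup>*\<^sup>* u a" "E a (z + i)"
      and above: "(\<lambda>i j. E (z + i) (z + j))\<^sup>*\<^sup>* i (w - z)"
      using step.IH by auto
    show ?thesis
    proof (cases "w' < z")
      case True
      have "excursion z a w'"
        unfolding excursion_def using a(3) above step(2) \<open>\<not> w < z\<close>
        by (intro exI[of _ i] exI[of _ "w - z"]) auto
      then have "shortcut z a w'" using a(1) True by (simp add: shortcut_def)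
      then show ?thesis using a True by (auto intro: rtranclp.rtrancl_into_rtrancl)
    next
      case False
      then have "(\<lambda>i j. E (z + i) (z + j))\<^sup>*\<^sup>* i (w' - z)"
        using above \<open>\<not> w < z\<close> step(2) by (auto intro: rtranclp.rtrancl_into_rtrancl)
      then show ?thesis using a False by auto
    qed
  qed
qed

lemma rtranclp_shortcut_iff: "u < z \<Longrightarrow> u' < z \<Longrightarrow> (shortcut z)\<^sup>*\<^sup>* u u' \<longleftrightarrow> E\<^sup>*\<^sup>* u u'"
  using rtranclp_imp_shortcut_or_above rtranclp_shortcut_imp by blast

text \<open>Relative to the frontier z, the key of a vertex u < z determines the edges between u and
  all vertices \<open>\<ge> z\<close>, also after the frontier has moved. The marks single out the two vertices
  whose connection is asked for.\<close>

definition key :: "(nat \<Rightarrow> bool \<times> bool) \<Rightarrow> nat \<Rightarrow> nat \<Rightarrow> vertex_key" where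
  "key mk z u = (rep u, rep (z - u), mk u)"

definition reach_keys :: "(nat \<Rightarrow> bool \<times> bool) \<Rightarrow> nat \<Rightarrow> (vertex_key \<times> vertex_key) set" where
  "reach_keys mk z = {(key mk z u, key mk z u') | u u'. u < z \<and> u' < z \<and> (E_below z)\<^sup>*\<^sup>* u u'}"

definition excursion_keys :: "(nat \<Rightarrow> bool \<times> bool) \<Rightarrow> nat \<Rightarrow> (vertex_key \<times> vertex_key) set" where
  "excursion_keys mk z = {(key mk z u, key mk z u') | u u'. u < z \<and> u' < z \<and> excursion z u u'}"

definition closure_keys :: "(nat \<Rightarrow> bool \<times> bool) \<Rightarrow> nat \<Rightarrow> (vertex_key \<times> vertex_key) set" where
  "closure_keys mk z = (reach_keys mk z O excursion_keys mk z)\<^sup>* O reach_keys mk z"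

lemma key_eqD: "key mk z u = key mk' z' v \<Longrightarrow> rep u = rep v \<and> rep (z - u) = rep (z' - v)"
  by (simp add: key_def)

lemma reach_keys_memE:
  assumes "(k, k') \<in> reach_keys mk z"
  obtains u u' where "u < z" "u' < z" "key mk z u = k" "key mk z u' = k'" "(E_below z)\<^sup>*\<^sup>* u u'"
  using assms unfolding reach_keys_def by blast

lemma reach_keys_memI:
  "u < z \<Longrightarrow> u' < z \<Longrightarrow> (E_below z)\<^sup>*\<^sup>* u u' \<Longrightarrow> (key mk z u, key mk z u') \<in> reach_keys mk z"
  unfolding reach_keys_def by blast

lemma key_transfer:
  assumes "reach_keys mk z = reach_keys mk' z'" "u < z"
  obtains v where "v < z'" "key mk' z' v = key mk z u"
  using reach_keys_memI[OF assms(2) assms(2) rtranclp.rtrancl_refl, of mk] assms(1)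
  by (auto elim: reach_keys_memE)

lemma excursion_cong:
  assumes "(\<lambda>i j. E (z + i) (z + j)) = (\<lambda>i j. E (z' + i) (z' + j))"
    and "u < z" "v < z'" "key mk z u = key mk' z' v"
    and "u' < z" "v' < z'" "key mk z u' = key mk' z' v'"
  shows "excursion z u u' \<longleftrightarrow> excursion z' v v'"
proof -
  have "rep (z + i - u) = rep (z' + i - v)" "rep (z + i - u') = rep (z' + i - v')" for i
    using rep_add[of "z - u" "z' - v" i] rep_add[of "z - u'" "z' - v'" i] assms(2-7)
    by (auto dest!: key_eqD simp: add.commute)
  moreover have "rep u = rep v" "rep u' = rep v'"
    using assms(4,7) by (auto dest: key_eqD)
  ultimately have "E u (z + i) = E v (z' + i)" "E (z + i) u' = E (z' + i) v'" for i
    using E_rep_cong[of u "z + i" v "z' + i"] E_rep_cong'[of u' "z + i" v' "z' + i"] assms(2,3,5,6)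
    by simp_all
  then show ?thesis
    unfolding excursion_def assms(1) by simp
qed

lemma above_shift: "N \<le> z \<Longrightarrow> p dvd d \<Longrightarrow> (\<lambda>i j. E (z + d + i) (z + d + j)) = (\<lambda>i j. E (z + i) (z + j))"
proof (intro ext)
  fix i j assume "N \<le> z" "p dvd d"
  then show "E (z + d + i) (z + d + j) = E (z + i) (z + j)"
    using E_shift_dvd[of "z + i" "z + j" d] by (simp add: algebra_simps)
qed

lemma excursion_keys_mono:
  assumes "reach_keys mk z = reach_keys mk' z'"
    and "(\<lambda>i j. E (z + i) (z + j)) = (\<lambda>i j. E (z' + i) (z' + j))"
  shows "excursion_keys mk z \<subseteq> excursion_keys mk' z'"
proof
  fix k assume "k \<in> excursion_keys mk z"
  then obtain u u' where k: "k = (key mk z u, key mk z u')" "u < z" "u' < z" "excursion z u u'"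
    unfolding excursion_keys_def by blast
  obtain v v' where v: "v < z'" "key mk' z' v = key mk z u" "v' < z'" "key mk' z' v' = key mk z u'"
    using key_transfer[OF assms(1) k(2)] key_transfer[OF assms(1) k(3)] by metis
  then have "excursion z' v v'"
    using excursion_cong[OF assms(2) k(2) v(1) v(2)[symmetric] k(3) v(3) v(4)[symmetric]] k(4) by simp
  then show "k \<in> excursion_keys mk' z'"
    using v k(1) unfolding excursion_keys_def by force
qed

lemma closure_keys_cong:
  assumes "reach_keys mk z = reach_keys mk' z'"
    and "(\<lambda>i j. E (z + i) (z + j)) = (\<lambda>i j. E (z' + i) (z' + j))"
  shows "closure_keys mk z = closure_keys mk' z'"
  using excursion_keys_mono[OF assms] excursion_keys_mono[OF assms[symmetric]] assms(1)
  by (simp add: closure_keys_def)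

definition to_top :: "nat \<Rightarrow> nat \<Rightarrow> bool" where
  "to_top z u \<longleftrightarrow> u = z \<or> (\<exists>w<z. (E_below z)\<^sup>*\<^sup>* u w \<and> E w z)"

definition from_top :: "nat \<Rightarrow> nat \<Rightarrow> bool" where
  "from_top z u \<longleftrightarrow> u = z \<or> (\<exists>w<z. E z w \<and> (E_below z)\<^sup>*\<^sup>* w u)"

lemma rtranclp_E_below_mono: "(E_below z)\<^sup>*\<^sup>* u w \<Longrightarrow> z \<le> z' \<Longrightarrow> (E_below z')\<^sup>*\<^sup>* u w"
  by (induction rule: rtranclp_induct) (auto simp: E_below_def intro: rtranclp.rtrancl_into_rtrancl)

lemma rtranclp_E_below_Suc_cases:
  assumes "(E_below (Suc z))\<^sup>*\<^sup>* u u'" "u \<le> z"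
  shows "(u < z \<and> u' < z \<and> (E_below z)\<^sup>*\<^sup>* u u') \<or> (to_top z u \<and> from_top z u')"
  using assms(1)
proof (induction rule: rtranclp_induct)
  case base
  then show ?case using assms(2) by (auto simp: to_top_def from_top_def)
next
  case (step w w')
  have w: "w \<le> z" "w' \<le> z" "E w w'" using step(2) by (auto simp: E_below_def)
  from step.IH show ?case
  proof
    assume below: "u < z \<and> w < z \<and> (E_below z)\<^sup>*\<^sup>* u w"
    show ?thesis
    proof (cases "w' < z")
      case True
      then have "E_below z w w'" using below w by (simp add: E_below_def)
      then show ?thesis using below True by (auto intro: rtranclp.rtrancl_into_rtrancl)
    next
      case False
      then show ?thesis using below w by (auto simp: to_top_def from_top_def)
    qed
  next
    assume top: "to_top z u \<and> from_top z w"
    have "from_top z w'"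
    proof (cases "w' = z")
      case False
      then have "w' < z" using w by simp
      show ?thesis
      proof (cases "w = z")
        case True
        then show ?thesis using w \<open>w' < z\<close> by (auto simp: from_top_def)
      next
        case False
        then obtain w0 where "w0 < z" "E z w0" "(E_below z)\<^sup>*\<^sup>* w0 w"
          using top by (auto simp: from_top_def)
        moreover have "E_below z w w'" using False w \<open>w' < z\<close> by (simp add: E_below_def)
        ultimately show ?thesis unfolding from_top_def by (meson rtranclp.rtrancl_into_rtrancl)
      qed
    qed (simp add: from_top_def)
    then show ?thesis using top by simp
  qed
qed

lemma rtranclp_E_below_Suc_through_top:
  assumes "to_top z u" "from_top z u'"
  shows "(E_below (Suc z))\<^sup>*\<^sup>* u u'"
proof -
  have "(E_below (Suc z))\<^sup>*\<^sup>* u z"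
  proof (cases "u = z")
    case False
    then obtain w where "w < z" "(E_below z)\<^sup>*\<^sup>* u w" "E w z" using assms(1) by (auto simp: to_top_def)
    then have "(E_below (Suc z))\<^sup>*\<^sup>* u w" "E_below (Suc z) w z"
      using rtranclp_E_below_mono[of z u w "Suc z"] by (auto simp: E_below_def)
    then show ?thesis by (rule rtranclp.rtrancl_into_rtrancl)
  qed simp
  moreover have "(E_below (Suc z))\<^sup>*\<^sup>* z u'"
  proof (cases "u' = z")
    case False
    then obtain w where "w < z" "E z w" "(E_below z)\<^sup>*\<^sup>* w u'" using assms(2) by (auto simp: from_top_def)
    then have "E_below (Suc z) z w" "(E_below (Suc z))\<^sup>*\<^sup>* w u'"
      using rtranclp_E_below_mono[of z w u' "Suc z"] by (auto simp: E_below_def)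
    then show ?thesis by (rule converse_rtranclp_into_rtranclp)
  qed simp
  ultimately show ?thesis by simp
qed

lemma key_Suc:
  "u < z \<Longrightarrow> v < z' \<Longrightarrow> key mk z u = key mk' z' v \<Longrightarrow> key mk (Suc z) u = key mk' (Suc z') v"
  using rep_Suc[of "z - u" "z' - v"] by (simp add: key_def Suc_diff_le)

lemma key_top: "rep z = rep z' \<Longrightarrow> mk z = mk' z' \<Longrightarrow> key mk (Suc z) z = key mk' (Suc z') z'"
  by (simp add: key_def)

lemma E_top_key:
  assumes "w < z" "v < z'" "key mk z w = key mk' z' v"
  shows "E w z = E v z' \<and> E z w = E z' v"
  using E_rep_cong[of w z v z'] E_rep_cong'[of w z v z'] assms by (simp add: key_def)

lemma to_top_transfer:
  assumes "rep z = rep z'" "mk z = mk' z'" "reach_keys mk z = reach_keys mk' z'"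
    and "to_top z u" "u \<le> z"
  obtains v where "v \<le> z'" "key mk' (Suc z') v = key mk (Suc z) u" "to_top z' v"
proof (cases "u = z")
  case True
  then show ?thesis using that[of z'] key_top[of z z' mk mk', OF assms(1,2)] by (simp add: to_top_def)
next
  case False
  then have "u < z" using assms(5) by simp
  obtain w where w: "w < z" "(E_below z)\<^sup>*\<^sup>* u w" "E w z"
    using False assms(4) by (auto simp: to_top_def)
  then have "(key mk z u, key mk z w) \<in> reach_keys mk' z'"
    using reach_keys_memI[OF \<open>u < z\<close> w(1,2), of mk] assms(3) by simp
  then obtain v v1 where v: "v < z'" "v1 < z'" "key mk' z' v = key mk z u" "key mk' z' v1 = key mk z w"
    "(E_below z')\<^sup>*\<^sup>* v v1"
    by (rule reach_keys_memE)
  have "E v1 z'" using E_top_key[OF w(1) v(2) v(4)[symmetric]] w(3) by simp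
  then have "to_top z' v" using v by (auto simp: to_top_def)
  moreover have "key mk' (Suc z') v = key mk (Suc z) u"
    using key_Suc[OF \<open>u < z\<close> v(1) v(3)[symmetric]] by simp
  ultimately show ?thesis using that[of v] v(1) by simp
qed

lemma from_top_transfer:
  assumes "rep z = rep z'" "mk z = mk' z'" "reach_keys mk z = reach_keys mk' z'"
    and "from_top z u" "u \<le> z"
  obtains v where "v \<le> z'" "key mk' (Suc z') v = key mk (Suc z) u" "from_top z' v"
proof (cases "u = z")
  case True
  then show ?thesis using that[of z'] key_top[of z z' mk mk', OF assms(1,2)] by (simp add: from_top_def)
next
  case False
  then have "u < z" using assms(5) by simp
  obtain w where w: "w < z" "E z w" "(E_below z)\<^sup>*\<^sup>* w u"
    using False assms(4) by (auto simp: from_top_def)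
  then have "(key mk z w, key mk z u) \<in> reach_keys mk' z'"
    using reach_keys_memI[OF w(1) \<open>u < z\<close> w(3), of mk] assms(3) by simp
  then obtain v1 v where v: "v1 < z'" "v < z'" "key mk' z' v1 = key mk z w" "key mk' z' v = key mk z u"
    "(E_below z')\<^sup>*\<^sup>* v1 v"
    by (rule reach_keys_memE)
  have "E z' v1" using E_top_key[OF w(1) v(1) v(3)[symmetric]] w(2) by simp
  then have "from_top z' v" using v by (auto simp: from_top_def)
  moreover have "key mk' (Suc z') v = key mk (Suc z) u"
    using key_Suc[OF \<open>u < z\<close> v(2) v(4)[symmetric]] by simp
  ultimately show ?thesis using that[of v] v(2) by simp
qed

lemma reach_keys_Suc_mono:
  assumes "rep z = rep z'" "mk z = mk' z'" "reach_keys mk z = reach_keys mk' z'"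
  shows "reach_keys mk (Suc z) \<subseteq> reach_keys mk' (Suc z')"
proof safe
  fix k k' assume "(k, k') \<in> reach_keys mk (Suc z)"
  then obtain u u' where u: "u < Suc z" "u' < Suc z" "key mk (Suc z) u = k" "key mk (Suc z) u' = k'"
    "(E_below (Suc z))\<^sup>*\<^sup>* u u'"
    by (rule reach_keys_memE)
  have "u \<le> z" "u' \<le> z" using u(1,2) by simp_all
  from rtranclp_E_below_Suc_cases[OF u(5) this(1)] show "(k, k') \<in> reach_keys mk' (Suc z')"
  proof
    assume below: "u < z \<and> u' < z \<and> (E_below z)\<^sup>*\<^sup>* u u'"
    then have "(key mk z u, key mk z u') \<in> reach_keys mk' z'"
      using reach_keys_memI[of u z u' mk] assms(3) by simp
    then obtain v v' where v: "v < z'" "v' < z'" "key mk' z' v = key mk z u" "key mk' z' v' = key mk z u'"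
      "(E_below z')\<^sup>*\<^sup>* v v'"
      by (rule reach_keys_memE)
    have "(key mk' (Suc z') v, key mk' (Suc z') v') \<in> reach_keys mk' (Suc z')"
      using v rtranclp_E_below_mono[OF v(5), of "Suc z'"] by (simp add: reach_keys_memI)
    then show ?thesis
      using key_Suc[OF _ v(1) v(3)[symmetric]] key_Suc[OF _ v(2) v(4)[symmetric]] below u(3,4) by simp
  next
    assume top: "to_top z u \<and> from_top z u'"
    obtain v where v: "v \<le> z'" "key mk' (Suc z') v = key mk (Suc z) u" "to_top z' v"
      using to_top_transfer[OF assms conjunct1[OF top] \<open>u \<le> z\<close>] .
    obtain v' where v': "v' \<le> z'" "key mk' (Suc z') v' = key mk (Suc z) u'" "from_top z' v'"
      using from_top_transfer[OF assms conjunct2[OF top] \<open>u' \<le> z\<close>] .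
    show ?thesis using u(3,4) v v'
      using rtranclp_E_below_Suc_through_top[OF v(3) v'(3)] reach_keys_memI[of v "Suc z'" v' mk'] by simp
  qed
qed

lemma reach_keys_Suc:
  "rep z = rep z' \<Longrightarrow> mk z = mk' z' \<Longrightarrow> reach_keys mk z = reach_keys mk' z' \<Longrightarrow>
   reach_keys mk (Suc z) = reach_keys mk' (Suc z')"
  by (intro subset_antisym reach_keys_Suc_mono) simp_all

lemma reach_keys_shift:
  assumes "reach_keys mk z = reach_keys mk' z'"
    and "\<And>i. i < n \<Longrightarrow> rep (z + i) = rep (z' + i) \<and> mk (z + i) = mk' (z' + i)"
  shows "reach_keys mk (z + n) = reach_keys mk' (z' + n)"
  using assms(2)
proof (induction n)
  case (Suc n)
  then have IH: "reach_keys mk (z + n) = reach_keys mk' (z' + n)"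
    and step: "rep (z + n) = rep (z' + n)" "mk (z + n) = mk' (z' + n)" by simp_all
  show ?case using reach_keys_Suc[OF step IH] by simp
qed (simp add: assms(1))

lemma reach_keys_cong_marks:
  assumes "\<And>u. u < z \<Longrightarrow> mk u = mk' u"
  shows "reach_keys mk z = reach_keys mk' z"
proof -
  have "reach_keys mk1 z \<subseteq> reach_keys mk2 z"
    if "\<And>u. u < z \<Longrightarrow> mk1 u = mk2 u" for mk1 mk2 :: "nat \<Rightarrow> bool \<times> bool"
  proof safe
    fix k k' assume "(k, k') \<in> reach_keys mk1 z"
    then obtain u u' where "u < z" "u' < z" "key mk1 z u = k" "key mk1 z u' = k'" "(E_below z)\<^sup>*\<^sup>* u u'"
      by (rule reach_keys_memE)
    then show "(k, k') \<in> reach_keys mk2 z"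
      using that reach_keys_memI[of u z u' mk2] by (simp add: key_def)
  qed
  then show ?thesis using assms by (simp add: subset_antisym)
qed

lemma rtranclp_E_below_shortcut: "(E_below z)\<^sup>*\<^sup>* a b \<Longrightarrow> (shortcut z)\<^sup>*\<^sup>* a b"
  by (induction rule: rtranclp_induct) (auto simp: E_below_def shortcut_def intro: rtranclp.rtrancl_into_rtrancl)

lemma shortcut_keys_forward:
  assumes "(shortcut z)\<^sup>*\<^sup>* u w" "u < z"
  shows "\<exists>a<z. (key mk z u, key mk z a) \<in> (reach_keys mk z O excursion_keys mk z)\<^sup>* \<and> (E_below z)\<^sup>*\<^sup>* a w"
  using assms(1)
proof (induction rule: rtranclp_induct)
  case base
  then show ?case using assms(2) by blast
next
  case (step w w')
  then obtain a where a: "a < z" "(key mk z u, key mk z a) \<in> (reach_keys mk z O excursion_keys mk z)\<^sup>*"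
    "(E_below z)\<^sup>*\<^sup>* a w"
    by blast
  show ?case
  proof (cases "E_below z w w'")
    case True
    then show ?thesis using a by (meson rtranclp.rtrancl_into_rtrancl)
  next
    case False
    then have w: "w < z" "w' < z" "excursion z w w'" using step(2) by (auto simp: shortcut_def E_below_def)
    have "(key mk z a, key mk z w) \<in> reach_keys mk z" using a w by (simp add: reach_keys_memI)
    moreover have "(key mk z w, key mk z w') \<in> excursion_keys mk z" using w by (auto simp: excursion_keys_def)
    ultimately have "(key mk z u, key mk z w') \<in> (reach_keys mk z O excursion_keys mk z)\<^sup>*"
      using a(2) by (meson relcomp.relcompI rtrancl.rtrancl_into_rtrancl)
    then show ?thesis using w by blast
  qed
qed

lemma shortcut_keys_backward:
  assumes "(key mk z x, k) \<in> (reach_keys mk z O excursion_keys mk z)\<^sup>*" "x < z"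
    and "\<And>a. fst (mk a) \<longleftrightarrow> a = x"
  shows "a < z \<Longrightarrow> key mk z a = k \<Longrightarrow> (shortcut z)\<^sup>*\<^sup>* x a"
  using assms(1)
proof (induction arbitrary: a rule: rtrancl_induct)
  case base
  then have "mk a = mk x" by (simp add: key_def)
  then show ?case using assms(3)[of a] assms(3)[of x] by simp
next
  case (step k1 k2)
  then obtain km where "(k1, km) \<in> reach_keys mk z" "(km, k2) \<in> excursion_keys mk z" by blast
  then obtain u1 u2 u3 u4 where u: "u1 < z" "u2 < z" "key mk z u1 = k1" "key mk z u2 = km" "(E_below z)\<^sup>*\<^sup>* u1 u2"
    and exc: "u3 < z" "u4 < z" "key mk z u3 = km" "key mk z u4 = k2" "excursion z u3 u4"
    by (auto elim!: reach_keys_memE simp: excursion_keys_def)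
  have "key mk z u3 = key mk z u2" "key mk z u4 = key mk z a"
    using exc u step.prems(2) by simp_all
  then have "excursion z u2 a"
    using excursion_cong[OF refl exc(1) u(2) _ exc(2) step.prems(1)] exc(5) by blast
  then have "shortcut z u2 a" using u(2) step.prems(1) by (simp add: shortcut_def)
  moreover have "(shortcut z)\<^sup>*\<^sup>* x u2"
    using step.IH[OF u(1,3)] rtranclp_E_below_shortcut[OF u(5)] by simp
  ultimately show ?case by (simp add: rtranclp.rtrancl_into_rtrancl)
qed

lemma rtranclp_iff_closure_keys:
  assumes "x < z" "y < z"
  shows "E\<^sup>*\<^sup>* x y \<longleftrightarrow> (key (marks x y) z x, key (marks x y) z y) \<in> closure_keys (marks x y) z"
    (is "_ \<longleftrightarrow> (?k x, ?k y) \<in> _")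
proof
  assume "E\<^sup>*\<^sup>* x y"
  then have "(shortcut z)\<^sup>*\<^sup>* x y" using rtranclp_shortcut_iff assms by blast
  then obtain a where a: "a < z" "(?k x, ?k a) \<in> (reach_keys (marks x y) z O excursion_keys (marks x y) z)\<^sup>*"
    "(E_below z)\<^sup>*\<^sup>* a y"
    using shortcut_keys_forward assms(1) by blast
  have "(?k a, ?k y) \<in> reach_keys (marks x y) z" using a assms by (simp add: reach_keys_memI)
  then show "(?k x, ?k y) \<in> closure_keys (marks x y) z" using a(2) unfolding closure_keys_def by blast
next
  assume "(?k x, ?k y) \<in> closure_keys (marks x y) z"
  then obtain k where k: "(?k x, k) \<in> (reach_keys (marks x y) z O excursion_keys (marks x y) z)\<^sup>*"
    "(k, ?k y) \<in> reach_keys (marks x y) z"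
    unfolding closure_keys_def by blast
  obtain u1 u2 where u: "u1 < z" "u2 < z" "?k u1 = k" "?k u2 = ?k y" "(E_below z)\<^sup>*\<^sup>* u1 u2"
    using k(2) by (rule reach_keys_memE)
  have "u2 = y" using u(4) by (simp add: key_def)
  have "(shortcut z)\<^sup>*\<^sup>* x u1" using shortcut_keys_backward[OF k(1) assms(1)] u by simp
  then have "(shortcut z)\<^sup>*\<^sup>* x y"
    using rtranclp_E_below_shortcut[OF u(5)] \<open>u2 = y\<close> by simp
  then show "E\<^sup>*\<^sup>* x y" using rtranclp_shortcut_iff assms by blast
qed

definition key_space :: "vertex_key set" where
  "key_space = {..<N + p} \<times> {..<N + p} \<times> UNIV"

definition rtc_threshold :: nat where
  "rtc_threshold = card (Pow (key_space \<times> key_space) \<times> {..<N + p})"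

definition rtc_period :: nat where
  "rtc_period = fact rtc_threshold"

lemma finite_key_space: "finite key_space"
  by (simp add: key_space_def)

lemma reach_keys_subset: "reach_keys mk z \<subseteq> key_space \<times> key_space"
  by (auto simp: reach_keys_def key_def key_space_def rep_less)

lemma le_rtc_threshold: "N + p \<le> rtc_threshold"
  by (simp add: rtc_threshold_def card_cartesian_product card_Pow finite_key_space)

lemma dvd_rtc_period: "p dvd rtc_period"
  unfolding rtc_period_def using le_rtc_threshold period_pos by (intro dvd_fact) auto

lemma reach_keys_periodic:
  assumes "N \<le> a" "\<And>u. a \<le> u \<Longrightarrow> mk u = (False, False)" "a + rtc_threshold \<le> z"
  shows "reach_keys mk (z + rtc_period) = reach_keys mk z"
proof -
  have "(\<lambda>z. (reach_keys mk z, rep z)) (z + rtc_period) = (\<lambda>z. (reach_keys mk z, rep z)) z"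
    unfolding rtc_period_def rtc_threshold_def
  proof (rule deterministic_seq_periodic)
    show "finite (Pow (key_space \<times> key_space) \<times> {..<N + p})" by (simp add: finite_key_space)
    show "(reach_keys mk i, rep i) \<in> Pow (key_space \<times> key_space) \<times> {..<N + p}" for i
      using reach_keys_subset rep_less by simp
    show "(reach_keys mk (Suc i), rep (Suc i)) = (reach_keys mk (Suc j), rep (Suc j))"
      if "a \<le> i" "a \<le> j" "(reach_keys mk i, rep i) = (reach_keys mk j, rep j)" for i j
      using that assms(2) reach_keys_Suc[of i j mk mk] rep_Suc[of i j] by simp
    show "a + card (Pow (key_space \<times> key_space) \<times> {..<N + p}) \<le> z"
      using assms(3) by (simp add: rtc_threshold_def)
  qed
  then show ?thesis by simp
qed

text \<open>The window [a, m) carries no marks and is long enough for reach_keys to have become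
  periodic, so shifting everything from m on by rtc_period preserves the summary.\<close>

lemma reach_keys_shift_above:
  assumes "N \<le> a" "a + rtc_threshold \<le> m" "m \<le> z"
    and x: "x + N < a \<or> m \<le> x" and y: "y + N < a \<or> m \<le> y"
  defines "shift v \<equiv> if v < m then v else v + rtc_period"
  shows "reach_keys (marks x y) z = reach_keys (marks (shift x) (shift y)) (z + rtc_period)"
proof -
  define mk0 where "mk0 u = (if u < a then marks x y u else (False, False))" for u
  have "N \<le> m" using assms(1,2) by simp
  have "reach_keys (marks x y) m = reach_keys mk0 m"
    using x y by (intro reach_keys_cong_marks) (auto simp: mk0_def)
  also have "\<dots> = reach_keys mk0 (m + rtc_period)"
    using reach_keys_periodic[OF assms(1) _ assms(2)] by (simp add: mk0_def)
  also have "\<dots> = reach_keys (marks (shift x) (shift y)) (m + rtc_period)"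
    using x y assms(2) by (intro reach_keys_cong_marks) (auto simp: mk0_def shift_def)
  finally have start: "reach_keys (marks x y) m = reach_keys (marks (shift x) (shift y)) (m + rtc_period)" .
  have "rep (m + i) = rep (m + rtc_period + i) \<and>
        marks x y (m + i) = marks (shift x) (shift y) (m + rtc_period + i)" for i
    using rep_add_dvd[OF _ dvd_rtc_period, of "m + i"] \<open>N \<le> m\<close> by (auto simp: shift_def ac_simps)
  then have "reach_keys (marks x y) (m + (z - m)) =
             reach_keys (marks (shift x) (shift y)) (m + rtc_period + (z - m))"
    by (intro reach_keys_shift[OF start])
  moreover have "m + (z - m) = z" "m + rtc_period + (z - m) = z + rtc_period"
    using assms(3) by simp_all
  ultimately show ?thesis by simp
qed

lemma rtranclp_shift_above:
  assumes "N \<le> a" "a + rtc_threshold \<le> m"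
    and x: "x + N < a \<or> m \<le> x" and y: "y + N < a \<or> m \<le> y"
  defines "shift v \<equiv> if v < m then v else v + rtc_period"
  shows "E\<^sup>*\<^sup>* (shift x) (shift y) = E\<^sup>*\<^sup>* x y"
proof -
  define z where "z = Suc (max m (max x y))"
  define mk' where "mk' = marks (shift x) (shift y)"
  have "N \<le> z" "m \<le> z" using assms(1,2) by (simp_all add: z_def)
  have reach: "reach_keys (marks x y) z = reach_keys mk' (z + rtc_period)"
    using reach_keys_shift_above[OF assms(1,2) \<open>m \<le> z\<close> x y] by (simp add: mk'_def shift_def)
  have closure: "closure_keys (marks x y) z = closure_keys mk' (z + rtc_period)"
    by (rule closure_keys_cong[OF reach above_shift[OF \<open>N \<le> z\<close> dvd_rtc_period, symmetric]])
  have shift_inj: "shift v = shift w \<longleftrightarrow> v = w" for v w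
    by (auto simp: shift_def)
  have key_shift: "key (marks x y) z v = key mk' (z + rtc_period) (shift v)"
    if "v + N < a \<or> m \<le> v" "v = x \<or> v = y" for v
  proof -
    have "v < z" using that(2) by (auto simp: z_def)
    have "rep v = rep (shift v) \<and> rep (z - v) = rep (z + rtc_period - shift v)"
    proof (cases "m \<le> v")
      case True
      then show ?thesis using assms(1,2) rep_add_dvd[OF _ dvd_rtc_period, of v] by (simp add: shift_def)
    next
      case False
      then have "shift v = v" "N \<le> z - v" "z + rtc_period - v = z - v + rtc_period"
        using that(1) assms(2) \<open>v < z\<close> by (auto simp: shift_def z_def)
      then show ?thesis using rep_add_dvd[OF _ dvd_rtc_period, of "z - v"] by simp
    qed
    then show ?thesis by (simp add: key_def mk'_def shift_inj)
  qed
  have "x < z" "y < z" "shift x < z + rtc_period" "shift y < z + rtc_period"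
    by (auto simp: z_def shift_def)
  then show ?thesis
    using rtranclp_iff_closure_keys[of x z y] rtranclp_iff_closure_keys[of "shift x" "z + rtc_period" "shift y"]
      closure key_shift[OF x] key_shift[OF y]
    by (simp add: mk'_def)
qed

lemma ult_periodic_rtranclp: "ult_periodic E\<^sup>*\<^sup>* (N + rtc_threshold + 1) rtc_period"
proof
  show "0 < rtc_period" by (simp add: rtc_period_def)
next
  fix x y assume "N + rtc_threshold + 1 \<le> x" "N + rtc_threshold + 1 \<le> y"
  then show "E\<^sup>*\<^sup>* (x + rtc_period) (y + rtc_period) = E\<^sup>*\<^sup>* x y"
    using rtranclp_shift_above[of N "min x y" x y] by simp
next
  fix x y assume "x + (N + rtc_threshold + 1) \<le> y"
  then show "E\<^sup>*\<^sup>* x (y + rtc_period) = E\<^sup>*\<^sup>* x y"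
    using rtranclp_shift_above[of "x + N + 1" y x y] le_rtc_threshold period_pos by simp
next
  fix x y assume "y + (N + rtc_threshold + 1) \<le> x"
  then show "E\<^sup>*\<^sup>* (x + rtc_period) y = E\<^sup>*\<^sup>* x y"
    using rtranclp_shift_above[of "y + N + 1" x x y] le_rtc_threshold period_pos by simp
qed

end

lemma rtc_on_range_iff:
  assumes "inj f"
  shows "rtc_on (range f) P (f m) (f n) \<longleftrightarrow> (\<lambda>i j. P [f i, f j])\<^sup>*\<^sup>* m n"
  unfolding rtc_on_def by (rule rtranclp_restrict_range_iff[OF assms])

theorem theorem4p1:
  fixes S :: "'s set" and rels :: "(nat \<times> ('s list \<Rightarrow> bool)) list"
    and phi :: "unit list \<Rightarrow> 's" and P :: "'s list \<Rightarrow> bool"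
  assumes "injective_unary_FA_presentation S rels phi"
    and "(2, P) \<in> set rels"
  shows "regular_rel {()} 2 (Lambda (lists {()}) phi 2 (\<lambda>xs. rtc_on S P (xs ! 0) (xs ! 1)))
         \<and> unary_FA_presentable S (rels @ [(2, \<lambda>xs. rtc_on S P (xs ! 0) (xs ! 1))])"
proof -
  have FA: "FA_presentation {()} (lists {()}) phi S rels" and "inj_on phi (lists {()})"
    using assms(1) by (simp_all add: injective_unary_FA_presentation_def)
  define psi where "psi m = phi (replicate m ())" for m
  have "lists {()} = range (\<lambda>m. replicate m ())"
    by (auto simp: image_iff) (metis replicate_length_unit)
  then have "inj psi" "range psi = S"
    using \<open>inj_on phi (lists {()})\<close> FA
    by (auto simp: psi_def inj_on_def FA_presentation_def image_image)
  have "regular_rel {()} 2 (Lambda (lists {()}) phi 2 P)"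
    using FA assms(2) by (auto simp: FA_presentation_def)
  then obtain N p where "ult_periodic (\<lambda>m n. P [psi m, psi n]) N p"
    unfolding regular_rel_unary_pair_iff psi_def by (rule ult_periodic_if_regular_pair_lang)
  then have "regular_lang (conv_alphabet {()} 2) (pair_lang (\<lambda>m n. P [psi m, psi n])\<^sup>*\<^sup>*)"
    by (rule ult_periodic.regular_pair_lang[OF ult_periodic.ult_periodic_rtranclp])
  then have reg: "regular_rel {()} 2 (Lambda (lists {()}) phi 2 (\<lambda>xs. rtc_on S P (xs ! 0) (xs ! 1)))"
    using rtc_on_range_iff[OF \<open>inj psi\<close>, of P] \<open>range psi = S\<close>
    by (simp add: regular_rel_unary_pair_iff psi_def)
  then show ?thesis
    using FA_presentation_snoc[OF FA reg] by (auto simp: unary_FA_presentable_def)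
qed

end
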